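(* Let $G$ be a graph with an edge coloring $c$, and let $\mathcal{L}$ be the set of connected representing graphs of $(G,c)$. If $$\mathcal{C}_0=\bigcap_{L\in\mathcal{L}}\{c(e): e\in T(L)\}$$ is nonempty, then $(G,c)$ is a good edge coloring, witnessed by a connected representing graph $L^\ast$ and a set of cut edges $X\subseteq T(L^\ast)$ with $\mathcal{C}_0\subseteq c(X)$; that is, $X$ is nonempty, and every edge of $G$ joining two different components of $L^\ast - X$ has a color in $c(X)$.
   Context: A representing graph of a graph $G$ with edge coloring $c$ is a spanning subgraph of $G$ obtained by taking exactly one edge of each color used by $c$. For a set of edges $E$, $c(E)$ denotes the set of colors of edges in $E$. For a graph $L$, $T(L)$ denotes its set of cut edges (bridges). The pair $(G,c)$ is a good edge coloring if there is a connected representing graph $L$ of $G$ and a nonempty set of cut edges $X\subseteq T(L)$ such that each edge of $G$ between different components of $L-X$ is colored by a color in $c(X)$. *)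

theory Defs
  imports Main
begin

definition graph :: "'v set \<Rightarrow> 'v set set \<Rightarrow> bool" where
  "graph V E \<longleftrightarrow> finite V \<and> (\<forall>e\<in>E. e \<subseteq> V \<and> card e = 2)"

definition adj :: "'v set set \<Rightarrow> ('v \<times> 'v) set" where
  "adj F = {(u, v). {u, v} \<in> F}"

definition reachable :: "'v set set \<Rightarrow> 'v \<Rightarrow> 'v \<Rightarrow> bool" where
  "reachable F u v \<longleftrightarrow> (u, v) \<in> (adj F)\<^sup>*"

definition connected_graph :: "'v set \<Rightarrow> 'v set set \<Rightarrow> bool" where
  "connected_graph V F \<longleftrightarrow> (\<forall>u\<in>V. \<forall>v\<in>V. reachable F u v)"

definition cut_edges :: "'v set set \<Rightarrow> 'v set set" where
  "cut_edges F = {e \<in> F. \<exists>u v. e = {u, v} \<and> \<not> reachable (F - {e}) u v}"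

text \<open>Representing graph of (G,c), G = (V,E): spanning subgraph (V,F) containing
  exactly one edge of each color used by c on E.\<close>
definition representing :: "'v set set \<Rightarrow> ('v set \<Rightarrow> 'c) \<Rightarrow> 'v set set \<Rightarrow> bool" where
  "representing E c F \<longleftrightarrow> F \<subseteq> E \<and> bij_betw c F (c ` E)"

definition connected_representing ::
  "'v set \<Rightarrow> 'v set set \<Rightarrow> ('v set \<Rightarrow> 'c) \<Rightarrow> 'v set set \<Rightarrow> bool" where
  "connected_representing V E c F \<longleftrightarrow> representing E c F \<and> connected_graph V F"

definition good_witness ::
  "'v set \<Rightarrow> 'v set set \<Rightarrow> ('v set \<Rightarrow> 'c) \<Rightarrow> 'v set set \<Rightarrow> 'v set set \<Rightarrow> bool" where
  "good_witness V E c F X \<longleftrightarrow> connected_representing V E c F \<and> X \<noteq> {} \<and> X \<subseteq> cut_edges F \<and>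
     (\<forall>u v. {u, v} \<in> E \<and> \<not> reachable (F - X) u v \<longrightarrow> c {u, v} \<in> c ` X)"

definition good_edge_coloring :: "'v set \<Rightarrow> 'v set set \<Rightarrow> ('v set \<Rightarrow> 'c) \<Rightarrow> bool" where
  "good_edge_coloring V E c \<longleftrightarrow> (\<exists>F X. good_witness V E c F X)"

end

theory Submission
  imports Defs
begin

text \<open>Let C be the set of colours that are bridge colours in every connected representing
  graph, fix a connected representing graph L0, and let X be its edges with colours in C.
  The key count: every rainbow edge set R (c injective on R) avoiding the colours C has more
  than card C components. Indeed, exchanging edges as in matroid augmentation makes all edges
  of L0 - X reachable in R without increasing the number of components; adding X then gives a
  connected rainbow graph, which extends to a connected representing graph. There X consists
  of bridges, so deleting its card C edges leaves at least card C + 1 components.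

  Now let uv be an edge of colour k \<notin> C. Some connected representing graph L has its k-edge
  off the bridges, so L minus its edges with colours in C \<union> {k} has at most card C + 1
  components. Augmenting it by L0 - X produces a rainbow set with at most, hence by the key
  count exactly, the card C + 1 components of L0 - X, still avoiding k. If u and v were
  separated in L0 - X, adding uv would leave only card C components, a contradiction.\<close>

lemma graph_finite_edges: "graph V E \<Longrightarrow> finite E"
  unfolding graph_def by (metis Pow_iff finite_Pow_iff finite_subset subsetI)

lemma graph_subset: "graph V E \<Longrightarrow> F \<subseteq> E \<Longrightarrow> graph V F"
  unfolding graph_def by blast

lemma graph_edgeE:
  assumes "graph V E" "e \<in> E"
  obtains u v where "e = {u, v}" "u \<in> V" "v \<in> V"
  using assms unfolding graph_def by (metis card_2_iff insert_subset)

section \<open>Reachability\<close>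

lemma reachable_refl [simp]: "reachable F x x"
  by (simp add: reachable_def)

lemma reachable_sym: "reachable F x y \<Longrightarrow> reachable F y x"
proof -
  have "sym (adj F)"
    unfolding sym_def adj_def by (auto simp: insert_commute)
  then show "reachable F x y \<Longrightarrow> reachable F y x"
    unfolding reachable_def by (meson sym_rtrancl symD)
qed

lemma reachable_trans: "reachable F x y \<Longrightarrow> reachable F y z \<Longrightarrow> reachable F x z"
  unfolding reachable_def by auto

lemma reachable_edge: "{a, b} \<in> F \<Longrightarrow> reachable F a b"
  unfolding reachable_def adj_def by auto

lemma reachable_subgraph:
  assumes "\<And>a b. {a, b} \<in> F \<Longrightarrow> reachable G a b" "reachable F x y"
  shows "reachable G x y"
proof -
  have "adj F \<subseteq> (adj G)\<^sup>*"
    using assms(1) unfolding adj_def reachable_def by auto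
  then show ?thesis
    using assms(2) rtrancl_subset_rtrancl unfolding reachable_def by blast
qed

lemma reachable_mono: "F \<subseteq> G \<Longrightarrow> reachable F x y \<Longrightarrow> reachable G x y"
  by (rule reachable_subgraph) (auto intro: reachable_edge)

lemma reachable_insert_edgeE:
  assumes "reachable (insert {u, v} F) x y"
  obtains "reachable F x y" | "reachable F x u" "reachable F v y" | "reachable F x v" "reachable F u y"
proof -
  have adj_insert: "adj (insert {u, v} F) = insert (u, v) (insert (v, u) (adj F))"
    unfolding adj_def by (auto simp: doubleton_eq_iff)
  have "reachable F x y \<or> (reachable F x u \<and> reachable F v y) \<or> (reachable F x v \<and> reachable F u y)"
    using assms unfolding reachable_def adj_insert rtrancl_insert by (auto intro: rtrancl_trans)
  then show ?thesis
    using that by blast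
qed

lemma connected_graph_if_edges_reachable:
  assumes "connected_graph V L" "\<And>a b. {a, b} \<in> L \<Longrightarrow> reachable F a b"
  shows "connected_graph V F"
  using assms reachable_subgraph[of L F] unfolding connected_graph_def by blast

lemma connected_graph_Diff_non_cut_edge:
  assumes "connected_graph V L" "e \<notin> cut_edges L"
  shows "connected_graph V (L - {e})"
  using assms(1)
proof (rule connected_graph_if_edges_reachable)
  fix a b assume "{a, b} \<in> L"
  then show "reachable (L - {e}) a b"
    using assms(2) unfolding cut_edges_def by (cases "{a, b} = e") (auto intro: reachable_edge)
qed

lemma cut_edge_of_subgraph:
  assumes "e \<in> F" "F \<subseteq> G" "e \<in> cut_edges G"
  shows "e \<in> cut_edges F"
  using assms reachable_mono[of "F - {e}" "G - {e}"] unfolding cut_edges_def by blast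

section \<open>Counting components\<close>

lemma image_factors_through:
  assumes "\<And>x y. x \<in> A \<Longrightarrow> y \<in> A \<Longrightarrow> g x = g y \<Longrightarrow> f x = f y" "x \<in> A"
  shows "f (inv_into A g (g x)) = f x"
proof -
  have "g (inv_into A g (g x)) = g x" "inv_into A g (g x) \<in> A"
    using assms(2) by (simp_all add: f_inv_into_f inv_into_into)
  then show ?thesis
    using assms by metis
qed

lemma card_image_le_card_image:
  assumes "finite A" "\<And>x y. x \<in> A \<Longrightarrow> y \<in> A \<Longrightarrow> g x = g y \<Longrightarrow> f x = f y"
  shows "card (f ` A) \<le> card (g ` A)"
proof -
  have "f ` A = (\<lambda>b. f (inv_into A g b)) ` (g ` A)"
    unfolding image_image by (rule image_cong) (simp_all add: image_factors_through[of A g f, OF assms(2)])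
  also have "card \<dots> \<le> card (g ` A)"
    using assms(1) by (intro card_image_le finite_imageI)
  finally show ?thesis .
qed

lemma eq_fibres_if_card_image_eq:
  assumes "finite A" "\<And>x y. x \<in> A \<Longrightarrow> y \<in> A \<Longrightarrow> g x = g y \<Longrightarrow> f x = f y"
    and "card (f ` A) = card (g ` A)" "x \<in> A" "y \<in> A" "f x = f y"
  shows "g x = g y"
proof -
  define h where "h b = f (inv_into A g b)" for b
  have h: "h (g z) = f z" if "z \<in> A" for z
    unfolding h_def using image_factors_through[of A g f, OF assms(2) that] .
  then have "f ` A = h ` (g ` A)"
    unfolding image_image by simp
  then have "inj_on h (g ` A)"
    using assms(1,3) by (simp add: eq_card_imp_inj_on)
  moreover have "h (g x) = h (g y)"
    using h assms(4-6) by simp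
  ultimately show ?thesis
    using assms(4,5) by (simp add: inj_on_eq_iff)
qed

definition component :: "'v set \<Rightarrow> 'v set set \<Rightarrow> 'v \<Rightarrow> 'v set" where
  "component V F x = {y \<in> V. reachable F x y}"

definition num_components :: "'v set \<Rightarrow> 'v set set \<Rightarrow> nat" where
  "num_components V F = card (component V F ` V)"

lemma component_eq: "reachable F x y \<Longrightarrow> component V F x = component V F y"
  unfolding component_def by (metis reachable_sym reachable_trans)

lemma component_eq_iff:
  "y \<in> V \<Longrightarrow> component V F x = component V F y \<longleftrightarrow> reachable F x y"
  using component_eq unfolding component_def by fastforce

lemma num_components_connected:
  "V \<noteq> {} \<Longrightarrow> connected_graph V F \<Longrightarrow> num_components V F = 1"
proof -
  assume "V \<noteq> {}" "connected_graph V F"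
  then have "component V F ` V = {V}"
    unfolding component_def connected_graph_def by auto
  then show ?thesis
    unfolding num_components_def by simp
qed

lemma num_components_mono:
  assumes "finite V" "\<And>x y. x \<in> V \<Longrightarrow> y \<in> V \<Longrightarrow> reachable F x y \<Longrightarrow> reachable G x y"
  shows "num_components V G \<le> num_components V F"
  unfolding num_components_def
  using assms by (intro card_image_le_card_image) (auto simp: component_eq_iff)

lemma reachable_if_num_components_eq:
  assumes "finite V" "\<And>x y. x \<in> V \<Longrightarrow> y \<in> V \<Longrightarrow> reachable F x y \<Longrightarrow> reachable G x y"
    and "num_components V G = num_components V F" "x \<in> V" "y \<in> V" "reachable G x y"
  shows "reachable F x y"
proof -
  have "component V F x = component V F y"
  proof (rule eq_fibres_if_card_image_eq[of V "component V F" "component V G"])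
    show "component V G x = component V G y"
      using assms(6) by (rule component_eq)
    show "component V G x' = component V G y'"
      if "x' \<in> V" "y' \<in> V" "component V F x' = component V F y'" for x' y'
      using that assms(2) by (simp add: component_eq_iff)
  qed (use assms(1,3-5) in \<open>simp_all add: num_components_def\<close>)
  then show ?thesis
    using assms(5) by (simp add: component_eq_iff)
qed

lemma num_components_insert_less:
  assumes "finite V" "u \<in> V" "v \<in> V" "\<not> reachable F u v"
  shows "num_components V (insert {u, v} F) < num_components V F"
proof -
  have mono: "reachable F x y \<Longrightarrow> reachable (insert {u, v} F) x y" for x y
    by (rule reachable_mono[of F]) auto
  have "reachable (insert {u, v} F) u v"
    by (simp add: reachable_edge)
  then have "num_components V (insert {u, v} F) \<noteq> num_components V F"
    using reachable_if_num_components_eq[OF assms(1) mono _ assms(2,3)] assms(4) by blast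
  moreover have "num_components V (insert {u, v} F) \<le> num_components V F"
    using num_components_mono[OF assms(1) mono] .
  ultimately show ?thesis
    by simp
qed

lemma num_components_le_Suc_insert:
  assumes "finite V"
  shows "num_components V F \<le> Suc (num_components V (insert {u, v} F))"
proof -
  let ?G = "insert {u, v} F"
  define A where "A = {x \<in> V. \<not> reachable F v x}"
  \<comment> \<open>Away from the component of v, a path through the new edge uv would pass through v.\<close>
  have fibres: "component V F x = component V F y"
    if "x \<in> A" "y \<in> A" "component V ?G x = component V ?G y" for x y
  proof -
    have "reachable ?G x y"
      using that by (simp add: A_def component_eq_iff)
    then have "reachable F x y"
      by (rule reachable_insert_edgeE) (use that reachable_sym[of F x v] in \<open>auto simp: A_def\<close>)
    then show ?thesis
      by (rule component_eq)
  qed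
  have "finite A"
    using assms by (simp add: A_def)
  then have "card (component V F ` A) \<le> card (component V ?G ` A)"
    using fibres by (rule card_image_le_card_image)
  also have "\<dots> \<le> num_components V ?G"
    unfolding num_components_def using assms by (intro card_mono) (auto simp: A_def)
  finally have A_le: "card (component V F ` A) \<le> num_components V ?G" .
  have "component V F ` V \<subseteq> insert (component V F v) (component V F ` A)"
  proof
    fix C assume "C \<in> component V F ` V"
    then obtain x where "x \<in> V" "C = component V F x"
      by blast
    then show "C \<in> insert (component V F v) (component V F ` A)"
      using component_eq[of F v x V] by (cases "reachable F v x") (auto simp: A_def)
  qed
  then have "num_components V F \<le> card (insert (component V F v) (component V F ` A))"
    unfolding num_components_def using assms by (intro card_mono) (simp_all add: A_def)
  also have "\<dots> \<le> Suc (card (component V F ` A))"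
    using assms by (simp add: A_def card_insert_if)
  finally show ?thesis
    using A_le by simp
qed

lemma num_components_Diff_le:
  assumes "graph V F" "Y \<subseteq> F"
  shows "num_components V (F - Y) \<le> num_components V F + card Y"
proof -
  have "finite Y"
    using assms graph_finite_edges finite_subset by blast
  then show ?thesis
    using assms(2)
  proof (induction Y rule: finite_induct)
    case (insert y Y)
    obtain a b where y: "y = {a, b}"
      using assms(1) insert.prems by (meson graph_edgeE insert_subset)
    have "insert {a, b} (F - insert y Y) = F - Y"
      using insert y by auto
    then have "num_components V (F - insert y Y) \<le> Suc (num_components V (F - Y))"
      using num_components_le_Suc_insert[of V "F - insert y Y" a b] assms(1)
      by (simp add: graph_def)
    then show ?case
      using insert by simp
  qed simp
qed

lemma num_components_Diff_cut_edges:
  assumes "graph V F" "Y \<subseteq> cut_edges F"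
  shows "num_components V F + card Y \<le> num_components V (F - Y)"
proof -
  have "Y \<subseteq> F"
    using assms(2) unfolding cut_edges_def by blast
  then have "finite Y"
    using assms(1) graph_finite_edges finite_subset by blast
  then show ?thesis
    using assms(2)
  proof (induction Y rule: finite_induct)
    case (insert y Y)
    have y: "y \<in> F - Y" "y \<in> cut_edges F"
      using insert.hyps(2) insert.prems unfolding cut_edges_def by auto
    then have "y \<in> cut_edges (F - Y)"
      by (intro cut_edge_of_subgraph[of y "F - Y" F]) auto
    moreover have "F - Y - {y} = F - insert y Y"
      by auto
    ultimately obtain a b where ab: "y = {a, b}" "\<not> reachable (F - insert y Y) a b"
      unfolding cut_edges_def by auto
    have "a \<in> V" "b \<in> V" "finite V"
      using assms(1) y(1) ab(1) unfolding graph_def by auto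
    moreover have "insert {a, b} (F - insert y Y) = F - Y"
      using y(1) ab(1) by auto
    ultimately have "num_components V (F - Y) < num_components V (F - insert y Y)"
      using num_components_insert_less[of V a b "F - insert y Y"] ab(2) by simp
    then show ?case
      using insert by simp
  qed simp
qed

section \<open>Rainbow edge sets\<close>

lemma connected_representingD:
  assumes "connected_representing V E c L"
  shows "L \<subseteq> E" "inj_on c L" "c ` L = c ` E" "connected_graph V L"
  using assms unfolding connected_representing_def representing_def bij_betw_def by auto

lemma image_colour_class: "C \<subseteq> c ` L \<Longrightarrow> c ` {e \<in> L. c e \<in> C} = C"
  by blast

lemma card_colour_class: "inj_on c L \<Longrightarrow> C \<subseteq> c ` L \<Longrightarrow> card {e \<in> L. c e \<in> C} = card C"
  using card_image[of c "{e \<in> L. c e \<in> C}"] image_colour_class[of C c L]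
  by (simp add: inj_on_subset)

lemma connected_representing_extension:
  assumes "Z \<subseteq> E" "inj_on c Z" "connected_graph V Z"
  obtains L where "Z \<subseteq> L" "connected_representing V E c L"
proof
  let ?P = "inv_into E c ` (c ` E - c ` Z)"
  have P: "?P \<subseteq> E" "c ` ?P = c ` E - c ` Z" "inj_on c ?P"
    by (auto simp: inv_into_into f_inv_into_f image_image inj_on_def)
  show "Z \<subseteq> Z \<union> ?P"
    by blast
  have "inj_on c (Z \<union> ?P)"
    using assms(2) P(2,3) by (auto simp: inj_on_Un)
  moreover have "c ` (Z \<union> ?P) = c ` E"
    unfolding image_Un P(2) using assms(1) by auto
  moreover have "connected_graph V (Z \<union> ?P)"
    using assms(3) reachable_mono[of Z "Z \<union> ?P"] unfolding connected_graph_def by blast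
  ultimately show "connected_representing V E c (Z \<union> ?P)"
    using assms(1) P(1) unfolding connected_representing_def representing_def bij_betw_def by blast
qed

lemma rainbow_exchange:
  assumes "graph V E" "R \<subseteq> E" "inj_on c R" "{a, b} \<in> E" "\<not> reachable R a b"
  defines "R' \<equiv> insert {a, b} R - {r \<in> R. c r = c {a, b}}"
  shows "R' \<subseteq> E" "inj_on c R'" "c ` R' = insert (c {a, b}) (c ` R)"
    and "num_components V R' + card (c ` R' - c ` R) \<le> num_components V R"
proof -
  let ?Y = "{r \<in> R. c r = c {a, b}}"
  have "{a, b} \<notin> R"
    using assms(5) reachable_edge[of a b R] by blast
  then have R': "R' = insert {a, b} (R - ?Y)"
    unfolding R'_def by auto
  show "R' \<subseteq> E"
    using assms(2,4) unfolding R'_def by blast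
  show "inj_on c R'"
    unfolding R' using assms(3) by (auto simp: inj_on_def)
  show colours: "c ` R' = insert (c {a, b}) (c ` R)"
    unfolding R' by auto
  have "finite V" "a \<in> V" "b \<in> V"
    using assms(1,4) unfolding graph_def by auto
  then have less: "num_components V (insert {a, b} R) < num_components V R"
    using assms(5) by (rule num_components_insert_less)
  show "num_components V R' + card (c ` R' - c ` R) \<le> num_components V R"
  proof (cases "c {a, b} \<in> c ` R")
    case True
    then obtain r where "r \<in> R" "c r = c {a, b}"
      by force
    then have "?Y = {r}"
      using assms(3) by (auto simp: inj_on_def)
    moreover have "graph V (insert {a, b} R)"
      using assms(1,2,4) by (simp add: graph_subset)
    ultimately have "num_components V R' \<le> num_components V (insert {a, b} R) + 1"
      unfolding R'_def using num_components_Diff_le[of V "insert {a, b} R" ?Y] by auto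
    then show ?thesis
      using less colours True by simp
  next
    case False
    then have "R' = insert {a, b} R"
      unfolding R'_def by (auto simp: image_iff)
    then show ?thesis
      using less colours False by (simp add: insert_Diff_if)
  qed
qed

text \<open>An exchange that gains a new colour merges two components, hence the term
  card (c ` R' - c ` R).\<close>
lemma rainbow_augmentation:
  assumes "graph V E" "R \<subseteq> E" "inj_on c R" "S \<subseteq> E" "inj_on c S"
  shows "\<exists>R'. R' \<subseteq> E \<and> inj_on c R' \<and> c ` R' \<subseteq> c ` R \<union> c ` S \<and>
    num_components V R' + card (c ` R' - c ` R) \<le> num_components V R \<and>
    (\<forall>a b. {a, b} \<in> S \<longrightarrow> reachable R' a b)"
  using assms(2,3)
proof (induction "card (S - R)" arbitrary: R rule: less_induct)
  case less
  show ?case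
  proof (cases "\<forall>a b. {a, b} \<in> S \<longrightarrow> reachable R a b")
    case True
    then show ?thesis
      using less.prems by (intro exI[of _ R]) auto
  next
    case False
    then obtain a b where ab: "{a, b} \<in> S" "\<not> reachable R a b"
      by blast
    define R'' where "R'' = insert {a, b} R - {r \<in> R. c r = c {a, b}}"
    have "{a, b} \<in> E"
      using ab(1) assms(4) by blast
    note exchange = rainbow_exchange[OF assms(1) less.prems this ab(2), folded R''_def]
    have "{a, b} \<notin> R"
      using ab(2) reachable_edge[of a b R] by blast
    then have "S - R'' = S - R - {{a, b}}"
      using ab(1) assms(5) unfolding R''_def by (auto simp: inj_on_def)
    moreover have "finite S"
      using assms(1,4) graph_finite_edges finite_subset by blast
    ultimately have "card (S - R'') < card (S - R)"
      using card_Diff1_less[of "S - R" "{a, b}"] ab(1) \<open>{a, b} \<notin> R\<close> by simp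
    from less.hyps[OF this exchange(1,2)]
    obtain R' where R': "R' \<subseteq> E" "inj_on c R'" "c ` R' \<subseteq> c ` R'' \<union> c ` S"
      "num_components V R' + card (c ` R' - c ` R'') \<le> num_components V R''"
      "\<forall>a b. {a, b} \<in> S \<longrightarrow> reachable R' a b"
      by blast
    have "finite (c ` R')" "finite (c ` R'')"
      using R'(1) exchange(1) assms(1) graph_finite_edges finite_subset by blast+
    then have "card (c ` R' - c ` R) \<le> card (c ` R' - c ` R'') + card (c ` R'' - c ` R)"
      by (intro card_Un_le[THEN order_trans[rotated]] card_mono) auto
    then show ?thesis
      using R' exchange(3,4) ab(1) by (intro exI[of _ R']) auto
  qed
qed

section \<open>Colours that are bridges in every connected representing graph\<close>

locale persistent_bridge_colours =
  fixes V :: "'v set" and E :: "'v set set" and c :: "'v set \<Rightarrow> 'c"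
    and C :: "'c set" and L0 :: "'v set set"
  assumes graph: "graph V E"
    and vertices_nonempty: "V \<noteq> {}"
    and L0: "connected_representing V E c L0"
    and persistent: "\<And>L. connected_representing V E c L \<Longrightarrow> C \<subseteq> c ` cut_edges L"
begin

definition C_edges :: "'v set set" where
  "C_edges = {e \<in> L0. c e \<in> C}"

lemma colours_subset:
  assumes "connected_representing V E c L"
  shows "C \<subseteq> c ` L"
  using persistent[OF assms] unfolding cut_edges_def by blast

lemma cut_edge_if_persistent_colour:
  assumes "connected_representing V E c L" "e \<in> L" "c e \<in> C"
  shows "e \<in> cut_edges L"
proof -
  have "c e \<in> c ` cut_edges L"
    using assms(3) persistent[OF assms(1)] by blast
  moreover have "cut_edges L \<subseteq> L"
    unfolding cut_edges_def by blast
  ultimately show ?thesis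
    using inj_on_image_mem_iff[OF connected_representingD(2)[OF assms(1)] assms(2)] by blast
qed

lemma image_C_edges: "c ` C_edges = C"
  unfolding C_edges_def using colours_subset[OF L0] by (rule image_colour_class)

lemma card_C_edges: "card C_edges = card C"
  unfolding C_edges_def
  by (rule card_colour_class[OF connected_representingD(2)[OF L0] colours_subset[OF L0]])

lemma card_less_num_components:
  assumes "R \<subseteq> E" "inj_on c R" "c ` R \<inter> C = {}"
  shows "card C < num_components V R"
proof -
  note L0 = connected_representingD[OF L0]
  have "L0 - C_edges \<subseteq> E" "inj_on c (L0 - C_edges)"
    using L0(1,2) by (auto intro: inj_on_subset)
  from rainbow_augmentation[OF graph assms(1,2) this]
  obtain R' where R': "R' \<subseteq> E" "inj_on c R'" "c ` R' \<subseteq> c ` R \<union> c ` (L0 - C_edges)"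
    "num_components V R' + card (c ` R' - c ` R) \<le> num_components V R"
    "\<forall>a b. {a, b} \<in> L0 - C_edges \<longrightarrow> reachable R' a b"
    by (elim exE conjE) simp
  have "c ` R' \<inter> C \<subseteq> (c ` R \<union> c ` (L0 - C_edges)) \<inter> C"
    using R'(3) by blast
  also have "\<dots> = {}"
    using assms(3) unfolding C_edges_def by auto
  finally have R'_colours: "c ` R' \<inter> C = {}"
    by blast
  define Z where "Z = R' \<union> C_edges"
  have "Z \<subseteq> E"
    using R'(1) L0(1) unfolding Z_def C_edges_def by blast
  moreover have "inj_on c Z"
  proof -
    have "inj_on c C_edges"
      using L0(2) unfolding C_edges_def by (rule inj_on_subset) blast
    moreover have "c ` R' \<inter> c ` C_edges = {}"
      using R'_colours image_C_edges by simp
    ultimately show ?thesis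
      unfolding Z_def inj_on_Un using R'(2) by blast
  qed
  moreover have "connected_graph V Z"
    using L0(4)
  proof (rule connected_graph_if_edges_reachable)
    fix a b assume "{a, b} \<in> L0"
    show "reachable Z a b"
    proof (cases "{a, b} \<in> C_edges")
      case True
      then show ?thesis
        by (intro reachable_edge) (simp add: Z_def)
    next
      case False
      then have "reachable R' a b"
        using R'(5) \<open>{a, b} \<in> L0\<close> by blast
      then show ?thesis
        by (rule reachable_mono[rotated]) (simp add: Z_def)
    qed
  qed
  ultimately obtain L where L: "Z \<subseteq> L" "connected_representing V E c L"
    by (rule connected_representing_extension)
  have "C_edges \<subseteq> cut_edges Z"
  proof
    fix e assume "e \<in> C_edges"
    then have "e \<in> cut_edges L"
      using L by (intro cut_edge_if_persistent_colour) (auto simp: Z_def C_edges_def)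
    moreover have "e \<in> Z"
      using \<open>e \<in> C_edges\<close> by (simp add: Z_def)
    ultimately show "e \<in> cut_edges Z"
      using cut_edge_of_subgraph[of e Z L] L(1) by blast
  qed
  with graph_subset[OF graph \<open>Z \<subseteq> E\<close>]
  have "num_components V Z + card C_edges \<le> num_components V (Z - C_edges)"
    by (rule num_components_Diff_cut_edges)
  moreover have "Z - C_edges = R'"
    using R'_colours image_C_edges unfolding Z_def by blast
  moreover have "num_components V Z = 1"
    using vertices_nonempty \<open>connected_graph V Z\<close> by (rule num_components_connected)
  ultimately show ?thesis
    using R'(4) card_C_edges by simp
qed

lemma reachable_Diff_C_edges:
  assumes "{u, v} \<in> E" "connected_representing V E c L" "c {u, v} \<notin> c ` cut_edges L"
  shows "reachable (L0 - C_edges) u v"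
proof (rule ccontr)
  assume not_reachable: "\<not> reachable (L0 - C_edges) u v"
  let ?k = "c {u, v}"
  note L = connected_representingD[OF assms(2)]
  have "?k \<notin> C"
    using persistent[OF assms(2)] assms(3) by blast
  obtain g where g: "g \<in> L" "c g = ?k"
    using L(3) assms(1) by (metis imageE imageI)
  then have "g \<notin> cut_edges L"
    using assms(3) by (metis imageI)
  with L(4) have connected: "connected_graph V (L - {g})"
    by (rule connected_graph_Diff_non_cut_edge)
  define R1 where "R1 = {e \<in> L. c e \<notin> insert ?k C}"
  have "c e = ?k \<longleftrightarrow> e = g" if "e \<in> L" for e
    using g L(2) that by (metis inj_onD)
  then have R1: "R1 = (L - {g}) - {e \<in> L - {g}. c e \<in> C}"
    unfolding R1_def by auto
  have "c ` L - {?k} \<subseteq> c ` (L - {g})"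
    using g(2) by auto
  then have "C \<subseteq> c ` (L - {g})"
    using colours_subset[OF assms(2)] \<open>?k \<notin> C\<close> by auto
  then have card_C: "card {e \<in> L - {g}. c e \<in> C} = card C"
    using L(2) by (intro card_colour_class) (auto intro: inj_on_subset)
  have "graph V (L - {g})"
    using L(1) by (intro graph_subset[OF graph]) blast
  then have "num_components V R1 \<le> num_components V (L - {g}) + card {e \<in> L - {g}. c e \<in> C}"
    unfolding R1 by (rule num_components_Diff_le) blast
  then have R1_components: "num_components V R1 \<le> card C + 1"
    using num_components_connected[OF vertices_nonempty connected] card_C by simp
  have "R1 \<subseteq> E" "inj_on c R1" "L0 - C_edges \<subseteq> E" "inj_on c (L0 - C_edges)"
    using L(1,2) connected_representingD(1,2)[OF L0] unfolding R1_def
    by (auto intro: inj_on_subset)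
  from rainbow_augmentation[OF graph this]
  obtain R where R: "R \<subseteq> E" "inj_on c R" "c ` R \<subseteq> c ` R1 \<union> c ` (L0 - C_edges)"
    "num_components V R + card (c ` R - c ` R1) \<le> num_components V R1"
    "\<forall>a b. {a, b} \<in> L0 - C_edges \<longrightarrow> reachable R a b"
    by (elim exE conjE) simp
  have "c ` R \<inter> C \<subseteq> (c ` R1 \<union> c ` (L0 - C_edges)) \<inter> C"
    using R(3) by blast
  also have "\<dots> = {}"
    unfolding R1_def C_edges_def by auto
  finally have R_colours: "c ` R \<inter> C = {}"
    by blast
  then have R_components: "card C < num_components V R"
    using R(1,2) by (intro card_less_num_components)
  then have "card (c ` R - c ` R1) = 0"
    using R(4) R1_components by simp
  moreover have "finite (c ` R)"
    using R(1) graph graph_finite_edges finite_subset by blast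
  ultimately have "?k \<notin> c ` R"
    unfolding R1_def by auto
  have "graph V L0"
    using graph_subset[OF graph connected_representingD(1)[OF L0]] .
  then have "num_components V (L0 - C_edges) \<le> num_components V L0 + card C_edges"
    by (rule num_components_Diff_le) (auto simp: C_edges_def)
  then have L0_components: "num_components V (L0 - C_edges) \<le> card C + 1"
    using num_components_connected[OF vertices_nonempty connected_representingD(4)[OF L0]]
      card_C_edges by simp
  have reach: "reachable R x y" if "reachable (L0 - C_edges) x y" for x y
    by (rule reachable_subgraph[OF _ that]) (use R(5) in blast)
  have "finite V" "u \<in> V" "v \<in> V"
    using graph assms(1) unfolding graph_def by auto
  then have "num_components V R \<le> num_components V (L0 - C_edges)"
    using reach by (intro num_components_mono)
  then have "num_components V R = num_components V (L0 - C_edges)"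
    using R_components L0_components by simp
  \<comment> \<open>So R and L0 - C_edges have the same components, and uv joins two of them.\<close>
  then have "\<not> reachable R u v"
    using reachable_if_num_components_eq[OF \<open>finite V\<close> reach] \<open>u \<in> V\<close> \<open>v \<in> V\<close> not_reachable
    by blast
  note exchange = rainbow_exchange[OF graph R(1,2) assms(1) this]
  have "c ` (insert {u, v} R - {r \<in> R. c r = ?k}) \<inter> C = {}"
    using exchange(3) R_colours \<open>?k \<notin> C\<close> by auto
  then have "card C < num_components V (insert {u, v} R - {r \<in> R. c r = ?k})"
    using exchange(1,2) by (intro card_less_num_components)
  moreover have "card (c ` (insert {u, v} R - {r \<in> R. c r = ?k}) - c ` R) = 1"
    using exchange(3) \<open>?k \<notin> c ` R\<close> by (simp add: insert_Diff_if)
  ultimately show False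
    using exchange(4) R(4) R1_components by simp
qed

lemma good_witness_C_edges:
  assumes "C \<noteq> {}"
    and maximal: "\<And>k. k \<notin> C \<Longrightarrow> \<exists>L. connected_representing V E c L \<and> k \<notin> c ` cut_edges L"
  shows "good_witness V E c L0 C_edges"
  unfolding good_witness_def
proof (intro conjI allI impI)
  show "connected_representing V E c L0"
    by (rule L0)
  show "C_edges \<noteq> {}"
    using assms(1) image_C_edges by auto
  show "C_edges \<subseteq> cut_edges L0"
    using cut_edge_if_persistent_colour[OF L0] unfolding C_edges_def by blast
  fix u v assume uv: "{u, v} \<in> E \<and> \<not> reachable (L0 - C_edges) u v"
  show "c {u, v} \<in> c ` C_edges"
  proof (rule ccontr)
    assume "c {u, v} \<notin> c ` C_edges"
    then obtain L where "connected_representing V E c L" "c {u, v} \<notin> c ` cut_edges L"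
      using maximal[of "c {u, v}"] image_C_edges by auto
    then show False
      using reachable_Diff_C_edges uv by blast
  qed
qed

end

theorem lemma9:
  fixes V :: "'v set" and E :: "'v set set" and c :: "'v set \<Rightarrow> 'c"
  defines "\<LL> \<equiv> {F. connected_representing V E c F}"
  defines "C0 \<equiv> (\<Inter>F\<in>\<LL>. c ` cut_edges F)"
  assumes "graph V E"
    and "\<LL> \<noteq> {}"
    and "C0 \<noteq> {}"
  shows "good_edge_coloring V E c \<and>
         (\<exists>F X. good_witness V E c F X \<and> C0 \<subseteq> c ` X)"
proof -
  obtain L0 where L0: "connected_representing V E c L0"
    using assms(4) unfolding \<LL>_def by blast
  have persistent: "C0 \<subseteq> c ` cut_edges L" if "connected_representing V E c L" for L
    using that unfolding C0_def \<LL>_def by blast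
  obtain e where "e \<in> cut_edges L0"
    using assms(5) persistent[OF L0] by blast
  then have "e \<in> E"
    using connected_representingD(1)[OF L0] unfolding cut_edges_def by blast
  then have "V \<noteq> {}"
    using assms(3) by (metis empty_iff graph_edgeE)
  then interpret persistent_bridge_colours V E c C0 L0
    using assms(3) L0 persistent by unfold_locales
  have "good_witness V E c L0 C_edges"
    using assms(5) by (rule good_witness_C_edges) (auto simp: C0_def \<LL>_def)
  then show ?thesis
    using image_C_edges unfolding good_edge_coloring_def by blast
qed

end
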